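(* Let $\eta$ be a loop in parameter space along which the local gap condition holds, and let $\mathcal{E}_{\mathrm{B}}(\eta)\to\mathbb{T}^{d+1}$ be the associated Bloch line bundle. If the north pole variety $\mathcal{N}_\eta$ is empty or the south pole variety $\mathcal{S}_\eta$ is empty, then $\mathcal{E}_{\mathrm{B}}(\eta)$ is trivial.
   Context: Consider a periodic two-band system with two internal degrees of freedom: a continuous map $Q\ni q\mapsto H(\cdot;q)$ with $H(k;q)=h_0(k;q)\mathrm{id}_2+\sum_{j=1}^3h_j(k;q)\sigma_j$, $k\in\mathbb{T}^d$, where the $h_j(\cdot;q)\in C(\mathbb{T}^d)$ are real-valued and $\sigma_1,\sigma_2,\sigma_3$ are the Pauli matrices. Let $|h|(k;q)=(\sum_{j=1}^3h_j(k;q)^2)^{1/2}$. Let $\eta:\mathbb{S}^1\to Q$ be continuous with $|h|(k;\eta(s))>0$ for all $k,s$ (local gap condition), fix $T>0$, and set $h_{\eta,j}(k,t)=h_j(k;\eta(2\pi t/T))$, $|h_\eta|(k,t)=|h|(k;\eta(2\pi t/T))$. The Fermi projection is $P_\eta(k,t)=\frac12\big(\mathrm{id}_2-\sum_{j=1}^3\frac{h_{\eta,j}(k,t)}{|h_\eta|(k,t)}\sigma_j\big)$, and the Bloch line bundle is $\mathcal{E}_{\mathrm{B}}(\eta)=\bigsqcup_{(k,t)\in\mathbb{T}^{d+1}}\mathrm{ran}\,P_\eta(k,t)$. With $\theta_\eta(k,t)=\arccos(h_{\eta,3}(k,t)/|h_\eta|(k,t))\in[0,\pi]$, the north and south pole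 varieties are $\mathcal{N}_\eta=\{(k,t)\in\mathbb{T}^{d+1}:\theta_\eta(k,t)=0\}$ and $\mathcal{S}_\eta=\{(k,t)\in\mathbb{T}^{d+1}:\theta_\eta(k,t)=\pi\}$. *)

theory Defs
  imports "HOL-Analysis.Analysis"
begin

definition sigma :: "nat \<Rightarrow> complex^2^2" where
  "sigma j = (if j = 1 then vector [vector [0, 1], vector [1, 0]]
              else if j = 2 then vector [vector [0, - \<i>], vector [\<i>, 0]]
              else vector [vector [1, 0], vector [0, -1]])"

text \<open>Coefficient functions h j k q (j = 0,1,2,3), k in R^d (periodic = torus), q in Q.\<close>

definition hnorm :: "(nat \<Rightarrow> 'k \<Rightarrow> 'q \<Rightarrow> real) \<Rightarrow> 'k \<Rightarrow> 'q \<Rightarrow> real" where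
  "hnorm h k q = sqrt ((h 1 k q)\<^sup>2 + (h 2 k q)\<^sup>2 + (h 3 k q)\<^sup>2)"

text \<open>Pullback along the loop: h_{eta,j}(k,t) = h_j(k; eta(2 pi t / T)), with S^1 the unit circle in C.\<close>

definition h_eta :: "(nat \<Rightarrow> 'k \<Rightarrow> 'q \<Rightarrow> real) \<Rightarrow> (complex \<Rightarrow> 'q) \<Rightarrow> real \<Rightarrow> nat \<Rightarrow> 'k \<Rightarrow> real \<Rightarrow> real" where
  "h_eta h \<eta> T j k t = h j k (\<eta> (cis (2 * pi * t / T)))"

definition hnorm_eta :: "(nat \<Rightarrow> 'k \<Rightarrow> 'q \<Rightarrow> real) \<Rightarrow> (complex \<Rightarrow> 'q) \<Rightarrow> real \<Rightarrow> 'k \<Rightarrow> real \<Rightarrow> real" where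
  "hnorm_eta h \<eta> T k t = hnorm h k (\<eta> (cis (2 * pi * t / T)))"

definition fermi_proj :: "(nat \<Rightarrow> 'k \<Rightarrow> 'q \<Rightarrow> real) \<Rightarrow> (complex \<Rightarrow> 'q) \<Rightarrow> real \<Rightarrow> 'k \<Rightarrow> real \<Rightarrow> complex^2^2" where
  "fermi_proj h \<eta> T k t = (\<chi> a b. (1/2) * ((mat 1 :: complex^2^2) $ a $ b
      - (\<Sum>j\<in>{1,2,3::nat}. complex_of_real (h_eta h \<eta> T j k t / hnorm_eta h \<eta> T k t) * sigma j $ a $ b)))"

definition theta_eta :: "(nat \<Rightarrow> 'k \<Rightarrow> 'q \<Rightarrow> real) \<Rightarrow> (complex \<Rightarrow> 'q) \<Rightarrow> real \<Rightarrow> 'k \<Rightarrow> real \<Rightarrow> real" where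
  "theta_eta h \<eta> T k t = arccos (h_eta h \<eta> T 3 k t / hnorm_eta h \<eta> T k t)"

text \<open>Pole varieties, as (Z^d x TZ)-periodic subsets of R^d x R (i.e. subsets of the torus).\<close>

definition north_pole :: "(nat \<Rightarrow> 'k \<Rightarrow> 'q \<Rightarrow> real) \<Rightarrow> (complex \<Rightarrow> 'q) \<Rightarrow> real \<Rightarrow> ('k \<times> real) set" where
  "north_pole h \<eta> T = {(k, t). theta_eta h \<eta> T k t = 0}"

definition south_pole :: "(nat \<Rightarrow> 'k \<Rightarrow> 'q \<Rightarrow> real) \<Rightarrow> (complex \<Rightarrow> 'q) \<Rightarrow> real \<Rightarrow> ('k \<times> real) set" where
  "south_pole h \<eta> T = {(k, t). theta_eta h \<eta> T k t = pi}"

definition int_vec :: "real^'d \<Rightarrow> bool" where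
  "int_vec z \<longleftrightarrow> (\<forall>i. z $ i \<in> \<int>)"

text \<open>The Bloch line bundle E_B(eta) = disjoint union over (k,t) in T^{d+1} of ran P_eta(k,t)
  is trivial iff it admits a global frame, i.e. a continuous nowhere-vanishing section
  over the torus T^{d+1} = R^d/Z^d x R/TZ (continuous, periodic map into C^2 with values
  in ran P_eta(k,t)).\<close>

definition bloch_bundle_trivial :: "(nat \<Rightarrow> real^'d \<Rightarrow> 'q \<Rightarrow> real) \<Rightarrow> (complex \<Rightarrow> 'q) \<Rightarrow> real \<Rightarrow> bool" where
  "bloch_bundle_trivial h \<eta> T \<longleftrightarrow>
     (\<exists>\<psi> :: (real^'d) \<times> real \<Rightarrow> complex^2.
        continuous_on UNIV \<psi> \<and>
        (\<forall>k t z. int_vec z \<longrightarrow> \<psi> (k + z, t) = \<psi> (k, t)) \<and>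
        (\<forall>k t. \<psi> (k, t + T) = \<psi> (k, t)) \<and>
        (\<forall>k t. \<psi> (k, t) \<in> range (\<lambda>v. fermi_proj h \<eta> T k t *v v) \<and> \<psi> (k, t) \<noteq> 0))"

end

theory Submission
  imports Defs
begin

text \<open>The diagonal entries of the Fermi projection are (1 \<mp> h_3/|h|)/2. If the north pole variety
  is empty, h_3/|h| never equals 1, so the first column of the projection never vanishes; it is a
  continuous periodic section of the Bloch bundle, i.e. a global frame. If the south pole
  variety is empty, the second column serves in the same way.\<close>

lemma continuous_on_h_eta:
  fixes h :: "nat \<Rightarrow> real^'d \<Rightarrow> 'q::topological_space \<Rightarrow> real"
  assumes h_cont: "continuous_on UNIV (\<lambda>(k, q). h j k q)"
    and \<eta>_cont: "continuous_on (sphere 0 1) \<eta>" and T_pos: "T > 0"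
  shows "continuous_on UNIV (\<lambda>p::(real^'d) \<times> real. h_eta h \<eta> T j (fst p) (snd p))"
proof -
  have "continuous_on UNIV (\<lambda>p::(real^'d) \<times> real. \<eta> (cis (2 * pi * snd p / T)))"
    by (rule continuous_on_compose2[OF \<eta>_cont]) (use T_pos in \<open>auto intro!: continuous_intros\<close>)
  then have "continuous_on UNIV (\<lambda>p::(real^'d) \<times> real. (fst p, \<eta> (cis (2 * pi * snd p / T))))"
    by (intro continuous_on_Pair continuous_intros)
  then have "continuous_on UNIV
      ((\<lambda>(k, q). h j k q) \<circ> (\<lambda>p::(real^'d) \<times> real. (fst p, \<eta> (cis (2 * pi * snd p / T)))))"
    by (rule continuous_on_compose) (rule continuous_on_subset[OF h_cont], simp)
  then show ?thesis
    by (simp add: h_eta_def o_def)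
qed

lemma continuous_on_fermi_proj_mult:
  fixes h :: "nat \<Rightarrow> real^'d \<Rightarrow> 'q::topological_space \<Rightarrow> real"
  assumes h_cont: "\<And>j. j \<le> 3 \<Longrightarrow> continuous_on UNIV (\<lambda>(k, q). h j k q)"
    and \<eta>_cont: "continuous_on (sphere 0 1) \<eta>"
    and gap: "\<And>k s. s \<in> sphere 0 1 \<Longrightarrow> hnorm h k (\<eta> s) > 0"
    and T_pos: "T > 0"
  shows "continuous_on UNIV (\<lambda>p::(real^'d) \<times> real. fermi_proj h \<eta> T (fst p) (snd p) *v v)"
proof -
  have h_eta_cont: "continuous_on UNIV (\<lambda>p::(real^'d) \<times> real. h_eta h \<eta> T j (fst p) (snd p))"
    if "j \<le> 3" for j
    using continuous_on_h_eta[of h j, OF h_cont[OF that] \<eta>_cont T_pos] .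
  have norm_pos: "hnorm_eta h \<eta> T k t \<noteq> 0" for k t
    unfolding hnorm_eta_def using gap[of "cis (2 * pi * t / T)" k] by simp
  have "continuous_on UNIV (\<lambda>p::(real^'d) \<times> real. sqrt ((h_eta h \<eta> T 1 (fst p) (snd p))\<^sup>2
      + (h_eta h \<eta> T 2 (fst p) (snd p))\<^sup>2 + (h_eta h \<eta> T 3 (fst p) (snd p))\<^sup>2))"
    by (intro continuous_intros h_eta_cont) auto
  then have norm_cont: "continuous_on UNIV (\<lambda>p::(real^'d) \<times> real. hnorm_eta h \<eta> T (fst p) (snd p))"
    by (simp add: hnorm_eta_def hnorm_def h_eta_def)
  have unit_cont: "continuous_on UNIV
      (\<lambda>p::(real^'d) \<times> real. h_eta h \<eta> T j (fst p) (snd p) / hnorm_eta h \<eta> T (fst p) (snd p))"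
    if "j \<le> 3" for j
    using norm_pos by (intro continuous_intros h_eta_cont that norm_cont) auto
  show ?thesis
    unfolding fermi_proj_def matrix_vector_mult_def
    by (intro continuous_intros continuous_on_vec_lambda continuous_on_of_real unit_cont) auto
qed

lemma fermi_proj_lattice_periodic:
  assumes h_per: "\<And>j k q z. j \<le> 3 \<Longrightarrow> int_vec z \<Longrightarrow> h j (k + z) q = h j k q"
    and "int_vec z"
  shows "fermi_proj h \<eta> T (k + z) t = fermi_proj h \<eta> T k t"
  using assms by (simp add: fermi_proj_def h_eta_def hnorm_eta_def hnorm_def)

lemma fermi_proj_time_periodic:
  assumes "T > 0"
  shows "fermi_proj h \<eta> T k (t + T) = fermi_proj h \<eta> T k t"
proof -
  have "2 * pi * (t + T) / T = 2 * pi * t / T + 2 * pi"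
    using assms by (simp add: field_simps)
  then have "cis (2 * pi * (t + T) / T) = cis (2 * pi * t / T)"
    by (simp add: complex_eq_iff cos_add sin_add)
  then show ?thesis
    by (simp add: fermi_proj_def h_eta_def hnorm_eta_def)
qed

lemma fermi_proj_diagonal:
  shows "fermi_proj h \<eta> T k t $ 1 $ 1
           = (1 - complex_of_real (h_eta h \<eta> T 3 k t / hnorm_eta h \<eta> T k t)) / 2"
    and "fermi_proj h \<eta> T k t $ 2 $ 2
           = (1 + complex_of_real (h_eta h \<eta> T 3 k t / hnorm_eta h \<eta> T k t)) / 2"
  by (simp_all add: fermi_proj_def sigma_def mat_def)

lemma fermi_proj_column_1_nonzero:
  assumes "(k, t) \<notin> north_pole h \<eta> T"
  shows "fermi_proj h \<eta> T k t *v axis 1 1 \<noteq> 0"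
proof
  assume "fermi_proj h \<eta> T k t *v axis 1 1 = 0"
  then have "fermi_proj h \<eta> T k t $ 1 $ 1 = 0"
    by (simp add: matrix_vector_mult_def axis_def vec_eq_iff if_distrib cong: if_cong)
  then have "h_eta h \<eta> T 3 k t / hnorm_eta h \<eta> T k t = 1"
    by (simp add: fermi_proj_diagonal complex_eq_iff)
  with assms show False
    by (simp add: north_pole_def theta_eta_def)
qed

lemma fermi_proj_column_2_nonzero:
  assumes "(k, t) \<notin> south_pole h \<eta> T"
  shows "fermi_proj h \<eta> T k t *v axis 2 1 \<noteq> 0"
proof
  assume "fermi_proj h \<eta> T k t *v axis 2 1 = 0"
  then have "fermi_proj h \<eta> T k t $ 2 $ 2 = 0"
    by (simp add: matrix_vector_mult_def axis_def vec_eq_iff if_distrib cong: if_cong)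
  then have "h_eta h \<eta> T 3 k t / hnorm_eta h \<eta> T k t = -1"
    by (simp add: fermi_proj_diagonal complex_eq_iff)
  with assms show False
    by (simp add: south_pole_def theta_eta_def)
qed

theorem theorem4p2:
  fixes h :: "nat \<Rightarrow> real^'d \<Rightarrow> 'q::topological_space \<Rightarrow> real"
    and \<eta> :: "complex \<Rightarrow> 'q"
    and T :: real
  assumes h_cont: "\<And>j. j \<le> 3 \<Longrightarrow> continuous_on UNIV (\<lambda>(k, q). h j k q)"
    and h_per: "\<And>j k q z. j \<le> 3 \<Longrightarrow> int_vec z \<Longrightarrow> h j (k + z) q = h j k q"
    and \<eta>_cont: "continuous_on (sphere 0 1) \<eta>"
    and gap: "\<And>k s. s \<in> sphere 0 1 \<Longrightarrow> hnorm h k (\<eta> s) > 0"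
    and T_pos: "T > 0"
    and poles: "north_pole h \<eta> T = {} \<or> south_pole h \<eta> T = {}"
  shows "bloch_bundle_trivial h \<eta> T"
proof -
  obtain v where nonzero: "\<And>k t. fermi_proj h \<eta> T k t *v v \<noteq> 0"
  proof (cases "north_pole h \<eta> T = {}")
    case True
    then show ?thesis
      by (intro that[of "axis 1 1"] fermi_proj_column_1_nonzero) simp
  next
    case False
    with poles show ?thesis
      by (intro that[of "axis 2 1"] fermi_proj_column_2_nonzero) simp
  qed
  define \<psi> where "\<psi> = (\<lambda>p::(real^'d) \<times> real. fermi_proj h \<eta> T (fst p) (snd p) *v v)"
  have "continuous_on UNIV \<psi>"
    unfolding \<psi>_def by (rule continuous_on_fermi_proj_mult[OF h_cont \<eta>_cont gap T_pos])
  moreover have "\<psi> (k + z, t) = \<psi> (k, t)" if "int_vec z" for k z t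
    using fermi_proj_lattice_periodic[of h, OF h_per that] by (simp add: \<psi>_def)
  moreover have "\<psi> (k, t + T) = \<psi> (k, t)" for k t
    by (simp add: \<psi>_def fermi_proj_time_periodic[OF T_pos])
  moreover have "\<psi> (k, t) \<in> range (\<lambda>v. fermi_proj h \<eta> T k t *v v) \<and> \<psi> (k, t) \<noteq> 0" for k t
    using nonzero by (simp add: \<psi>_def)
  ultimately show ?thesis
    unfolding bloch_bundle_trivial_def by blast
qed

end
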